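(* Assume Assumption 1 and Assumption 2 (as defined in the context) and the null hypothesis $H_0:\ T_i(1)=T_i(0)$ for all $1\le i\le n$. Then, conditioning on all potential event times $\boldsymbol{T}(1),\boldsymbol{T}(0)$, for every time $t\ge 0$, $$\overline{D}_1(t)\mid \boldsymbol{T}(1),\boldsymbol{T}(0),\overline{N}(t),\overline{D}(t),\overline{N}_1(t)\ \sim\ \mathrm{HGeom}\big(\overline{N}(t),\overline{D}(t),\overline{N}_1(t)\big).$$
   Context: There are $n$ units. Unit $i$ has potential event times $T_i(1),T_i(0)\ge 0$ (under treatment and control), potential censoring times $C_i(1),C_i(0)\in[0,\infty]$, and treatment indicator $Z_i\in\{0,1\}$; bold letters denote the corresponding $n$-vectors. Assumption 1: conditional on $\boldsymbol{T}(1),\boldsymbol{T}(0),\boldsymbol{C}(1),\boldsymbol{C}(0)$, the $Z_i$ are i.i.d. Bernoulli$(p_1)$ with $p_1=1-p_0\in(0,1)$. Assumption 2: $(\boldsymbol{C}(1),\boldsymbol{C}(0))$ is independent of $(\boldsymbol{T}(1),\boldsymbol{T}(0))$, and the pairs $(C_i(1),C_i(0))$, $1\le i\le n$, are i.i.d. (the two components of a pair may be dependent and have different distributions). Realized quantities: $T_i=Z_iT_i(1)+(1-Z_i)T_i(0)$, $C_i=Z_iC_i(1)+(1-Z_i)C_i(0)$, $W_i=\min\{T_i,C_i\}$, $\Delta_i=\mathbb{1}(T_i\le C_i)$. For $t\ge 0$: $\overline{N}_1(t)=\sum_i Z_i\mathbb{1}(W_i\ge t)$, $\overline{N}_0(t)=\sum_i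 (1-Z_i)\mathbb{1}(W_i\ge t)$, $\overline{N}(t)=\overline{N}_1(t)+\overline{N}_0(t)$, $\overline{D}_1(t)=\sum_i Z_i\Delta_i\mathbb{1}(W_i=t)$, $\overline{D}(t)=\sum_i\Delta_i\mathbb{1}(W_i=t)$. $\mathrm{HGeom}(m,k,b)$ denotes the hypergeometric distribution of the number of successes in $b$ draws without replacement from a population of size $m$ containing exactly $k$ successes. *)

theory Defs
  imports "HOL-Probability.Probability"
begin

text \<open>Realized quantities for units 0..n-1, given potential event times T1, T0 (real),
  treatment indicators z (True = treated) and potential censoring times c1, c0 in [0,\<infinity>] (ereal).\<close>

definition realT :: "(nat \<Rightarrow> real) \<Rightarrow> (nat \<Rightarrow> real) \<Rightarrow> (nat \<Rightarrow> bool) \<Rightarrow> nat \<Rightarrow> real" where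
  "realT T1 T0 z i = (if z i then T1 i else T0 i)"

definition realC :: "(nat \<Rightarrow> ereal) \<Rightarrow> (nat \<Rightarrow> ereal) \<Rightarrow> (nat \<Rightarrow> bool) \<Rightarrow> nat \<Rightarrow> ereal" where
  "realC c1 c0 z i = (if z i then c1 i else c0 i)"

definition obsW :: "(nat \<Rightarrow> real) \<Rightarrow> (nat \<Rightarrow> real) \<Rightarrow> (nat \<Rightarrow> ereal) \<Rightarrow> (nat \<Rightarrow> ereal)
    \<Rightarrow> (nat \<Rightarrow> bool) \<Rightarrow> nat \<Rightarrow> ereal" where
  "obsW T1 T0 c1 c0 z i = min (ereal (realT T1 T0 z i)) (realC c1 c0 z i)"

definition obsDelta :: "(nat \<Rightarrow> real) \<Rightarrow> (nat \<Rightarrow> real) \<Rightarrow> (nat \<Rightarrow> ereal) \<Rightarrow> (nat \<Rightarrow> ereal)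
    \<Rightarrow> (nat \<Rightarrow> bool) \<Rightarrow> nat \<Rightarrow> bool" where
  "obsDelta T1 T0 c1 c0 z i = (ereal (realT T1 T0 z i) \<le> realC c1 c0 z i)"

definition Nbar1 :: "nat \<Rightarrow> (nat \<Rightarrow> real) \<Rightarrow> (nat \<Rightarrow> real) \<Rightarrow> (nat \<Rightarrow> ereal) \<Rightarrow> (nat \<Rightarrow> ereal)
    \<Rightarrow> (nat \<Rightarrow> bool) \<Rightarrow> real \<Rightarrow> nat" where
  "Nbar1 n T1 T0 c1 c0 z t = card {i. i < n \<and> z i \<and> ereal t \<le> obsW T1 T0 c1 c0 z i}"

definition Nbar0 :: "nat \<Rightarrow> (nat \<Rightarrow> real) \<Rightarrow> (nat \<Rightarrow> real) \<Rightarrow> (nat \<Rightarrow> ereal) \<Rightarrow> (nat \<Rightarrow> ereal)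
    \<Rightarrow> (nat \<Rightarrow> bool) \<Rightarrow> real \<Rightarrow> nat" where
  "Nbar0 n T1 T0 c1 c0 z t = card {i. i < n \<and> \<not> z i \<and> ereal t \<le> obsW T1 T0 c1 c0 z i}"

definition Nbar :: "nat \<Rightarrow> (nat \<Rightarrow> real) \<Rightarrow> (nat \<Rightarrow> real) \<Rightarrow> (nat \<Rightarrow> ereal) \<Rightarrow> (nat \<Rightarrow> ereal)
    \<Rightarrow> (nat \<Rightarrow> bool) \<Rightarrow> real \<Rightarrow> nat" where
  "Nbar n T1 T0 c1 c0 z t = Nbar1 n T1 T0 c1 c0 z t + Nbar0 n T1 T0 c1 c0 z t"

definition Dbar1 :: "nat \<Rightarrow> (nat \<Rightarrow> real) \<Rightarrow> (nat \<Rightarrow> real) \<Rightarrow> (nat \<Rightarrow> ereal) \<Rightarrow> (nat \<Rightarrow> ereal)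
    \<Rightarrow> (nat \<Rightarrow> bool) \<Rightarrow> real \<Rightarrow> nat" where
  "Dbar1 n T1 T0 c1 c0 z t =
     card {i. i < n \<and> z i \<and> obsDelta T1 T0 c1 c0 z i \<and> obsW T1 T0 c1 c0 z i = ereal t}"

definition Dbar :: "nat \<Rightarrow> (nat \<Rightarrow> real) \<Rightarrow> (nat \<Rightarrow> real) \<Rightarrow> (nat \<Rightarrow> ereal) \<Rightarrow> (nat \<Rightarrow> ereal)
    \<Rightarrow> (nat \<Rightarrow> bool) \<Rightarrow> real \<Rightarrow> nat" where
  "Dbar n T1 T0 c1 c0 z t =
     card {i. i < n \<and> obsDelta T1 T0 c1 c0 z i \<and> obsW T1 T0 c1 c0 z i = ereal t}"

definition hgeom_pmf :: "nat \<Rightarrow> nat \<Rightarrow> nat \<Rightarrow> nat \<Rightarrow> real" where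
  "hgeom_pmf m k b j =
     (if j \<le> k \<and> j \<le> b \<and> b - j \<le> m - k
      then real (k choose j) * real ((m - k) choose (b - j)) / real (m choose b) else 0)"

end

(*
  Under H0 the event time of a unit does not depend on its treatment, so the units with an event
  at t form the deterministic set {i. T_i = t}, and unit i is at risk at t iff t <= T_i and
  t <= C_i(Z_i). The unit observations (Z_i, C_i(1), C_i(0)) are independent, and they are
  identically distributed because Z_i ~ Bernoulli(p1) is independent of the identically distributed
  pair (C_i(1), C_i(0)). Hence the probability that the risk set is S and its treated part is U
  factorises over the units into four unit-level probabilities whose exponents depend only on the
  sizes of S and U. Given those sizes and the number of units of S with event time t, the pair (S, U)
  is therefore uniformly distributed, and counting the b-subsets of S with j units of event time t
  gives the hypergeometric law.
*)

theory Submission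
  imports Defs
begin

lemma card_subsets_inter_eq:
  assumes "finite S" and "j \<le> b"
  shows "card {U. U \<subseteq> S \<and> card U = b \<and> card (U \<inter> E) = j}
       = (card (S \<inter> E) choose j) * (card (S - E) choose (b - j))"
proof -
  let ?P1 = "{X. X \<subseteq> S \<inter> E \<and> card X = j}" and ?P2 = "{Y. Y \<subseteq> S - E \<and> card Y = b - j}"
  have split: "{U. U \<subseteq> S \<and> card U = b \<and> card (U \<inter> E) = j} = (\<lambda>(X, Y). X \<union> Y) ` (?P1 \<times> ?P2)"
  proof (intro set_eqI iffI)
    fix U assume U: "U \<in> {U. U \<subseteq> S \<and> card U = b \<and> card (U \<inter> E) = j}"
    then have "card U = card (U \<inter> E) + card (U - E)"
      using assms by (metis card_Int_Diff finite_subset mem_Collect_eq)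
    with U \<open>j \<le> b\<close> have "(U \<inter> E, U - E) \<in> ?P1 \<times> ?P2"
      by auto
    then show "U \<in> (\<lambda>(X, Y). X \<union> Y) ` (?P1 \<times> ?P2)"
      by (intro image_eqI[where x = "(U \<inter> E, U - E)"]) auto
  next
    fix U assume "U \<in> (\<lambda>(X, Y). X \<union> Y) ` (?P1 \<times> ?P2)"
    then obtain X Y where XY: "X \<in> ?P1" "Y \<in> ?P2" "U = X \<union> Y"
      by auto
    have "finite X" "finite Y"
      using XY assms by (auto intro: finite_subset)
    moreover have "X \<inter> Y = {}" "U \<inter> E = X"
      using XY by auto
    ultimately have "card U = card X + card Y" "U \<inter> E = X"
      using XY by (auto simp: card_Un_disjoint)
    with XY \<open>j \<le> b\<close> show "U \<in> {U. U \<subseteq> S \<and> card U = b \<and> card (U \<inter> E) = j}"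
      by auto
  qed
  have "inj_on (\<lambda>(X, Y). X \<union> Y) (?P1 \<times> ?P2)"
    by (rule inj_onI) auto
  then have "card {U. U \<subseteq> S \<and> card U = b \<and> card (U \<inter> E) = j} = card ?P1 * card ?P2"
    by (simp add: split card_image card_cartesian_product)
  also have "\<dots> = (card (S \<inter> E) choose j) * (card (S - E) choose (b - j))"
    using assms n_subsets[of "S \<inter> E" j] n_subsets[of "S - E" "b - j"] by simp
  finally show ?thesis .
qed

lemma card_subsets_inter_eq_hgeom:
  assumes "finite S"
  shows "real (card {U. U \<subseteq> S \<and> card U = b \<and> card (U \<inter> E) = j})
       = hgeom_pmf (card S) (card (S \<inter> E)) b j * real (card S choose b)"
proof (cases "j \<le> b")
  case True
  have "card (S \<inter> E) \<le> card S" "card (S - E) = card S - card (S \<inter> E)"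
    using assms by (auto intro: card_mono simp: card_Diff_subset_Int)
  then show ?thesis
    using True card_subsets_inter_eq[OF assms True, of E] by (auto simp: hgeom_pmf_def)
next
  case False
  have "card (U \<inter> E) \<le> card U" if "U \<subseteq> S" for U
    using assms that by (meson card_mono finite_subset inf_le1)
  then have no_subsets: "{U. U \<subseteq> S \<and> card U = b \<and> card (U \<inter> E) = j} = {}"
    using False by force
  show ?thesis
    using False by (subst no_subsets) (simp add: hgeom_pmf_def)
qed

lemma (in prob_space) prob_eq_sum_finite_range:
  assumes "finite R" and "\<And>\<omega>. \<omega> \<in> space M \<Longrightarrow> X \<omega> \<in> R"
    and "\<And>x. x \<in> R \<Longrightarrow> {\<omega> \<in> space M. X \<omega> = x} \<in> events"
  shows "\<P>(\<omega> in M. P (X \<omega>)) = (\<Sum>x\<in>{x \<in> R. P x}. \<P>(\<omega> in M. X \<omega> = x))"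
proof -
  have "{\<omega> \<in> space M. P (X \<omega>)} = (\<Union>x\<in>{x \<in> R. P x}. {\<omega> \<in> space M. X \<omega> = x})"
    using assms(2) by auto
  then show ?thesis
    using assms by (auto intro!: finite_measure_finite_Union simp: disjoint_family_on_def)
qed

locale exchangeable_nested_sets = prob_space M for M :: "'a measure" +
  fixes S U :: "'a \<Rightarrow> 'b set" and A :: "'b set" and F :: "nat \<Rightarrow> nat \<Rightarrow> real"
  assumes finite_A: "finite A"
    and nested: "\<And>\<omega>. \<omega> \<in> space M \<Longrightarrow> U \<omega> \<subseteq> S \<omega> \<and> S \<omega> \<subseteq> A"
    and nested_events: "\<And>S0 U0. S0 \<subseteq> A \<Longrightarrow> U0 \<subseteq> S0 \<Longrightarrow>
           {\<omega> \<in> space M. S \<omega> = S0 \<and> U \<omega> = U0} \<in> events"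
    and prob_nested_eq: "\<And>S0 U0. S0 \<subseteq> A \<Longrightarrow> U0 \<subseteq> S0 \<Longrightarrow>
           \<P>(\<omega> in M. S \<omega> = S0 \<and> U \<omega> = U0) = F (card S0) (card U0)"
begin

lemma prob_cards_eq_sum:
  "\<P>(\<omega> in M. Q (U \<omega>) \<and> card (S \<omega>) = m \<and> card (S \<omega> \<inter> E) = k \<and> card (U \<omega>) = b)
     = F m b * (\<Sum>S0\<in>{S0. S0 \<subseteq> A \<and> card S0 = m \<and> card (S0 \<inter> E) = k}.
                  real (card {U0. U0 \<subseteq> S0 \<and> card U0 = b \<and> Q U0}))"
proof -
  define R where "R = {(S0, U0). S0 \<subseteq> A \<and> U0 \<subseteq> S0}"
  define SS where "SS = {S0. S0 \<subseteq> A \<and> card S0 = m \<and> card (S0 \<inter> E) = k}"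
  let ?fibre = "\<lambda>S0. {U0. U0 \<subseteq> S0 \<and> card U0 = b \<and> Q U0}"
  have "R \<subseteq> Pow A \<times> Pow A"
    by (auto simp: R_def)
  then have "finite R"
    using finite_A by (meson finite_Pow_iff finite_SigmaI finite_subset)
  have "finite SS"
    using finite_A unfolding SS_def by (auto intro: finite_subset[of _ "Pow A"])
  have fibre_finite: "finite (?fibre S0)" if "S0 \<in> SS" for S0
    using that finite_A unfolding SS_def by (auto intro: finite_subset[of _ "Pow S0"] finite_subset)
  have in_R: "\<And>\<omega>. \<omega> \<in> space M \<Longrightarrow> (S \<omega>, U \<omega>) \<in> R"
    by (auto simp: R_def dest: nested)
  have events_R: "\<And>p. p \<in> R \<Longrightarrow> {\<omega> \<in> space M. (S \<omega>, U \<omega>) = p} \<in> events"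
    by (auto simp: R_def intro: nested_events)
  have fibres_in_R: "{p \<in> R. p \<in> Sigma SS ?fibre} = Sigma SS ?fibre"
    by (auto simp: R_def SS_def)
  have "\<P>(\<omega> in M. Q (U \<omega>) \<and> card (S \<omega>) = m \<and> card (S \<omega> \<inter> E) = k \<and> card (U \<omega>) = b)
      = \<P>(\<omega> in M. (S \<omega>, U \<omega>) \<in> Sigma SS ?fibre)"
    by (rule arg_cong[where f = prob]) (auto simp: SS_def dest: nested)
  also have "\<dots> = (\<Sum>p\<in>Sigma SS ?fibre. \<P>(\<omega> in M. (S \<omega>, U \<omega>) = p))"
    using prob_eq_sum_finite_range[OF \<open>finite R\<close> in_R events_R, where P = "\<lambda>p. p \<in> Sigma SS ?fibre"]
    by (simp only: fibres_in_R)
  also have "\<dots> = (\<Sum>S0\<in>SS. \<Sum>U0\<in>?fibre S0. \<P>(\<omega> in M. S \<omega> = S0 \<and> U \<omega> = U0))"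
    using \<open>finite SS\<close> fibre_finite by (subst sum.Sigma) (auto simp: case_prod_beta prod_eq_iff)
  also have "\<dots> = (\<Sum>S0\<in>SS. \<Sum>U0\<in>?fibre S0. F m b)"
    by (intro sum.cong refl) (auto simp: SS_def prob_nested_eq)
  finally show ?thesis
    by (simp add: SS_def sum_distrib_left mult.commute)
qed

lemma cond_prob_card_inter_eq_hgeom:
  assumes "\<P>(\<omega> in M. card (S \<omega>) = m \<and> card (S \<omega> \<inter> E) = k \<and> card (U \<omega>) = b) > 0"
  shows "\<P>(\<omega> in M. card (U \<omega> \<inter> E) = j \<bar> card (S \<omega>) = m \<and> card (S \<omega> \<inter> E) = k \<and> card (U \<omega>) = b)
           = hgeom_pmf m k b j"
proof -
  have "real (card {U0. U0 \<subseteq> S0 \<and> card U0 = b \<and> card (U0 \<inter> E) = j})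
      = hgeom_pmf m k b j * real (card {U0. U0 \<subseteq> S0 \<and> card U0 = b})"
    if "S0 \<subseteq> A" "card S0 = m" "card (S0 \<inter> E) = k" for S0
    using that finite_A card_subsets_inter_eq_hgeom[of S0 b E j] n_subsets[of S0 b]
    by (simp add: finite_subset)
  then have "\<P>(\<omega> in M. card (U \<omega> \<inter> E) = j \<and> card (S \<omega>) = m \<and> card (S \<omega> \<inter> E) = k \<and> card (U \<omega>) = b)
      = hgeom_pmf m k b j * \<P>(\<omega> in M. card (S \<omega>) = m \<and> card (S \<omega> \<inter> E) = k \<and> card (U \<omega>) = b)"
    using prob_cards_eq_sum[of "\<lambda>U0. card (U0 \<inter> E) = j"] prob_cards_eq_sum[of "\<lambda>_. True"]
    by (simp add: sum_distrib_left mult_ac)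
  then show ?thesis
    using assms by (simp add: cond_prob_def)
qed

end

lemma (in prob_space) prob_indep_vars_all:
  assumes indep: "indep_vars M' X I" and "finite I" and A: "\<And>i. i \<in> I \<Longrightarrow> A i \<in> sets (M' i)"
  shows "\<P>(\<omega> in M. \<forall>i\<in>I. X i \<omega> \<in> A i) = (\<Prod>i\<in>I. \<P>(\<omega> in M. X i \<omega> \<in> A i))"
proof (cases "I = {}")
  case True
  then show ?thesis
    by (simp add: prob_space)
next
  case False
  have "{\<omega> \<in> space M. \<forall>i\<in>I. X i \<omega> \<in> A i} = (\<Inter>i\<in>I. X i -` A i \<inter> space M)"
    using False by auto
  moreover have "\<And>i. {\<omega> \<in> space M. X i \<omega> \<in> A i} = X i -` A i \<inter> space M"
    by auto
  ultimately show ?thesis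
    using indep_varsD_finite[OF indep False \<open>finite I\<close> A] by simp
qed

lemma (in prob_space) prob_indep_bool_pair:
  assumes X: "X \<in> M \<rightarrow>\<^sub>M N" and Z: "{\<omega> \<in> space M. Z \<omega>} \<in> events"
    and indep: "\<And>B. B \<in> sets N \<Longrightarrow>
           \<P>(\<omega> in M. Z \<omega> \<and> X \<omega> \<in> B) = \<P>(\<omega> in M. Z \<omega>) * \<P>(\<omega> in M. X \<omega> \<in> B)"
    and Q: "Q \<in> sets (count_space UNIV \<Otimes>\<^sub>M N)"
  shows "\<P>(\<omega> in M. (Z \<omega>, X \<omega>) \<in> Q)
       = \<P>(\<omega> in M. Z \<omega>) * measure (distr M N X) (Pair True -` Q)
         + (1 - \<P>(\<omega> in M. Z \<omega>)) * measure (distr M N X) (Pair False -` Q)"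
proof -
  note X[measurable]
  have [measurable]: "Measurable.pred M Z"
    using Z by (simp add: pred_def)
  have law: "\<P>(\<omega> in M. X \<omega> \<in> B) = measure (distr M N X) B" if "B \<in> sets N" for B
    using measure_distr[OF X that] by (simp add: vimage_def Int_def conj_commute)
  have untreated:
    "\<P>(\<omega> in M. \<not> Z \<omega> \<and> X \<omega> \<in> B) = (1 - \<P>(\<omega> in M. Z \<omega>)) * \<P>(\<omega> in M. X \<omega> \<in> B)"
    if [measurable]: "B \<in> sets N" for B
  proof -
    have "{\<omega> \<in> space M. \<not> Z \<omega> \<and> X \<omega> \<in> B}
        = {\<omega> \<in> space M. X \<omega> \<in> B} - {\<omega> \<in> space M. Z \<omega> \<and> X \<omega> \<in> B}"
      by blast
    then show ?thesis
      using finite_measure_Diff[of "{\<omega> \<in> space M. X \<omega> \<in> B}" "{\<omega> \<in> space M. Z \<omega> \<and> X \<omega> \<in> B}"]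
        indep[OF that]
      by (auto simp: left_diff_distrib)
  qed
  have sections [measurable]: "Pair True -` Q \<in> sets N" "Pair False -` Q \<in> sets N"
    using Q by (rule sets_Pair1)+
  have "(Z \<omega>, X \<omega>) \<in> Q
      \<longleftrightarrow> Z \<omega> \<and> X \<omega> \<in> Pair True -` Q \<or> \<not> Z \<omega> \<and> X \<omega> \<in> Pair False -` Q" for \<omega>
    by (cases "Z \<omega>") auto
  then have "\<P>(\<omega> in M. (Z \<omega>, X \<omega>) \<in> Q)
      = \<P>(\<omega> in M. Z \<omega> \<and> X \<omega> \<in> Pair True -` Q \<or> \<not> Z \<omega> \<and> X \<omega> \<in> Pair False -` Q)"
    by simp
  also have "\<dots> = \<P>(\<omega> in M. Z \<omega> \<and> X \<omega> \<in> Pair True -` Q)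
      + \<P>(\<omega> in M. \<not> Z \<omega> \<and> X \<omega> \<in> Pair False -` Q)"
    by (subst finite_measure_Union[symmetric]) (measurable, measurable, auto intro!: arg_cong[where f = prob])
  finally show ?thesis
    by (simp only: indep[OF sections(1)] untreated[OF sections(2)] law[OF sections(1)] law[OF sections(2)])
qed

lemma prod_membership_pattern:
  assumes "U \<subseteq> S" "S \<subseteq> A" "A \<subseteq> I" "finite I"
  shows "(\<Prod>i\<in>I. h (i \<in> S) (i \<in> U) (i \<in> A))
       = h True True True ^ card U * h True False True ^ (card S - card U)
         * h False False True ^ (card A - card S) * h False False False ^ (card I - card A)"
proof -
  let ?f = "\<lambda>i. h (i \<in> S) (i \<in> U) (i \<in> A)"
  have const: "prod ?f X = h s u a ^ card X"
    if "\<forall>i\<in>X. (i \<in> S \<longleftrightarrow> s) \<and> (i \<in> U \<longleftrightarrow> u) \<and> (i \<in> A \<longleftrightarrow> a)" for X s u a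
  proof -
    have "prod ?f X = prod (\<lambda>_. h s u a) X"
      using that by (intro prod.cong) auto
    then show ?thesis
      by simp
  qed
  have finite: "finite A" "finite S" "finite U"
    using assms by (auto intro: finite_subset)
  have "prod ?f I = prod ?f (I - A) * (prod ?f (A - S) * (prod ?f (S - U) * prod ?f U))"
    using assms finite prod.subset_diff[of A I ?f] prod.subset_diff[of S A ?f] prod.subset_diff[of U S ?f]
    by (simp only:)
  also have "prod ?f U = h True True True ^ card U"
    using const[of U True True True] assms by blast
  also have "prod ?f (S - U) = h True False True ^ (card S - card U)"
    by (subst const[of "S - U" True False True]) (use assms finite in \<open>auto simp: card_Diff_subset\<close>)
  also have "prod ?f (A - S) = h False False True ^ (card A - card S)"
    by (subst const[of "A - S" False False True]) (use assms finite in \<open>auto simp: card_Diff_subset\<close>)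
  also have "prod ?f (I - A) = h False False False ^ (card I - card A)"
    by (subst const[of "I - A" False False False]) (use assms finite in \<open>auto simp: card_Diff_subset\<close>)
  finally show ?thesis
    by (simp add: mult_ac)
qed

definition at_risk :: "nat \<Rightarrow> (nat \<Rightarrow> real) \<Rightarrow> (nat \<Rightarrow> real) \<Rightarrow> (nat \<Rightarrow> ereal) \<Rightarrow> (nat \<Rightarrow> ereal)
    \<Rightarrow> (nat \<Rightarrow> bool) \<Rightarrow> real \<Rightarrow> nat set" where
  "at_risk n T1 T0 c1 c0 z t = {i. i < n \<and> ereal t \<le> obsW T1 T0 c1 c0 z i}"

lemma mem_at_risk_iff:
  "i \<in> at_risk n T1 T0 c1 c0 z t \<longleftrightarrow> i < n \<and> t \<le> realT T1 T0 z i \<and> ereal t \<le> realC c1 c0 z i"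
  by (auto simp: at_risk_def obsW_def)

lemma Nbar_eq_card_at_risk: "Nbar n T1 T0 c1 c0 z t = card (at_risk n T1 T0 c1 c0 z t)"
proof -
  have "at_risk n T1 T0 c1 c0 z t
      = {i. i < n \<and> z i \<and> ereal t \<le> obsW T1 T0 c1 c0 z i}
        \<union> {i. i < n \<and> \<not> z i \<and> ereal t \<le> obsW T1 T0 c1 c0 z i}"
    by (auto simp: at_risk_def)
  then show ?thesis
    by (simp add: Nbar_def Nbar1_def Nbar0_def card_Un_disjoint disjoint_iff)
qed

lemma Nbar1_eq_card_at_risk: "Nbar1 n T1 T0 c1 c0 z t = card {i \<in> at_risk n T1 T0 c1 c0 z t. z i}"
  by (simp add: Nbar1_def at_risk_def conj_ac)

lemma Dbar_eq_card_at_risk: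
  "Dbar n T1 T0 c1 c0 z t = card {i \<in> at_risk n T1 T0 c1 c0 z t. realT T1 T0 z i = t}"
  by (auto simp: Dbar_def mem_at_risk_iff obsDelta_def obsW_def min_def intro!: arg_cong[where f = card])

lemma Dbar1_eq_card_at_risk:
  "Dbar1 n T1 T0 c1 c0 z t = card {i \<in> at_risk n T1 T0 c1 c0 z t. z i \<and> realT T1 T0 z i = t}"
  by (auto simp: Dbar1_def mem_at_risk_iff obsDelta_def obsW_def min_def intro!: arg_cong[where f = card])

definition risk_pattern :: "real \<Rightarrow> bool \<Rightarrow> bool \<Rightarrow> bool \<Rightarrow> (bool \<times> ereal \<times> ereal) set" where
  "risk_pattern t s u a = {(z, c1, c0). (s \<longleftrightarrow> a \<and> ereal t \<le> (if z then c1 else c0)) \<and> (u \<longleftrightarrow> z \<and> s)}"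

lemma risk_pattern_sets: "risk_pattern t s u a \<in> sets (count_space UNIV \<Otimes>\<^sub>M (borel \<Otimes>\<^sub>M borel))"
proof -
  have "Measurable.pred (count_space UNIV \<Otimes>\<^sub>M (borel \<Otimes>\<^sub>M borel))
      (\<lambda>(z, c1, c0). (s \<longleftrightarrow> a \<and> ereal t \<le> (if z then c1 else c0)) \<and> (u \<longleftrightarrow> z \<and> s))"
    by measurable
  then show ?thesis
    by (simp add: risk_pattern_def pred_def space_pair_measure)
qed

locale null_survival_trial = prob_space M for M :: "'a measure" +
  fixes n :: nat and p1 :: real and T1 T0 :: "nat \<Rightarrow> real"
    and Z :: "nat \<Rightarrow> 'a \<Rightarrow> bool" and C1 C0 :: "nat \<Rightarrow> 'a \<Rightarrow> ereal"
  assumes H0: "\<forall>i<n. T1 i = T0 i"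
    and indep_units: "indep_vars (\<lambda>_. count_space UNIV \<Otimes>\<^sub>M (borel \<Otimes>\<^sub>M borel))
                        (\<lambda>i \<omega>. (Z i \<omega>, (C1 i \<omega>, C0 i \<omega>))) {..<n}"
    and indep_Z_C: "\<forall>i<n. \<forall>A \<in> sets (borel \<Otimes>\<^sub>M borel).
                        measure M {\<omega> \<in> space M. Z i \<omega> \<and> (C1 i \<omega>, C0 i \<omega>) \<in> A}
                        = measure M {\<omega> \<in> space M. Z i \<omega>} * measure M {\<omega> \<in> space M. (C1 i \<omega>, C0 i \<omega>) \<in> A}"
    and Z_bernoulli: "\<forall>i<n. measure M {\<omega> \<in> space M. Z i \<omega>} = p1"
    and C_ident: "\<forall>i<n. distr M (borel \<Otimes>\<^sub>M borel) (\<lambda>\<omega>. (C1 i \<omega>, C0 i \<omega>))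
                       = distr M (borel \<Otimes>\<^sub>M borel) (\<lambda>\<omega>. (C1 0 \<omega>, C0 0 \<omega>))"
begin

abbreviation risk_set :: "real \<Rightarrow> 'a \<Rightarrow> nat set" where
  "risk_set t \<omega> \<equiv> at_risk n T1 T0 (\<lambda>i. C1 i \<omega>) (\<lambda>i. C0 i \<omega>) (\<lambda>i. Z i \<omega>) t"

abbreviation treated_risk_set :: "real \<Rightarrow> 'a \<Rightarrow> nat set" where
  "treated_risk_set t \<omega> \<equiv> {i \<in> risk_set t \<omega>. Z i \<omega>}"

definition unit_obs :: "nat \<Rightarrow> 'a \<Rightarrow> bool \<times> ereal \<times> ereal" where
  "unit_obs i \<omega> = (Z i \<omega>, C1 i \<omega>, C0 i \<omega>)"

lemma realT_eq_T1: "i < n \<Longrightarrow> realT T1 T0 z i = T1 i"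
  using H0 by (simp add: realT_def)

lemma risk_sets_event_time_eq:
  "{i \<in> risk_set t \<omega>. realT T1 T0 (\<lambda>i. Z i \<omega>) i = t} = risk_set t \<omega> \<inter> {i. T1 i = t}"
  "{i \<in> risk_set t \<omega>. Z i \<omega> \<and> realT T1 T0 (\<lambda>i. Z i \<omega>) i = t}
     = treated_risk_set t \<omega> \<inter> {i. T1 i = t}"
  by (auto simp: mem_at_risk_iff realT_eq_T1)

lemma counts_eq_card_risk_sets:
  "Nbar n T1 T0 (\<lambda>i. C1 i \<omega>) (\<lambda>i. C0 i \<omega>) (\<lambda>i. Z i \<omega>) t = card (risk_set t \<omega>)"
  "Dbar n T1 T0 (\<lambda>i. C1 i \<omega>) (\<lambda>i. C0 i \<omega>) (\<lambda>i. Z i \<omega>) t = card (risk_set t \<omega> \<inter> {i. T1 i = t})"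
  "Nbar1 n T1 T0 (\<lambda>i. C1 i \<omega>) (\<lambda>i. C0 i \<omega>) (\<lambda>i. Z i \<omega>) t = card (treated_risk_set t \<omega>)"
  "Dbar1 n T1 T0 (\<lambda>i. C1 i \<omega>) (\<lambda>i. C0 i \<omega>) (\<lambda>i. Z i \<omega>) t
     = card (treated_risk_set t \<omega> \<inter> {i. T1 i = t})"
  by (simp_all only: Nbar_eq_card_at_risk Dbar_eq_card_at_risk Nbar1_eq_card_at_risk
      Dbar1_eq_card_at_risk risk_sets_event_time_eq)

lemma mem_risk_pattern_iff:
  "i < n \<Longrightarrow> unit_obs i \<omega> \<in> risk_pattern t s u (t \<le> T1 i)
     \<longleftrightarrow> (s \<longleftrightarrow> i \<in> risk_set t \<omega>) \<and> (u \<longleftrightarrow> i \<in> treated_risk_set t \<omega>)"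
  by (auto simp: unit_obs_def risk_pattern_def mem_at_risk_iff realT_eq_T1 realC_def)

lemma risk_sets_eq_iff_patterns:
  assumes "S0 \<subseteq> {..<n}" "U0 \<subseteq> {..<n}"
  shows "risk_set t \<omega> = S0 \<and> treated_risk_set t \<omega> = U0
     \<longleftrightarrow> (\<forall>i\<in>{..<n}. unit_obs i \<omega> \<in> risk_pattern t (i \<in> S0) (i \<in> U0) (t \<le> T1 i))"
proof -
  have "risk_set t \<omega> \<subseteq> {..<n}"
    by (auto simp: mem_at_risk_iff)
  then have "risk_set t \<omega> = S0 \<longleftrightarrow> (\<forall>i\<in>{..<n}. i \<in> S0 \<longleftrightarrow> i \<in> risk_set t \<omega>)"
    "treated_risk_set t \<omega> = U0 \<longleftrightarrow> (\<forall>i\<in>{..<n}. i \<in> U0 \<longleftrightarrow> i \<in> treated_risk_set t \<omega>)"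
    using assms by blast+
  then show ?thesis
    by (simp add: mem_risk_pattern_iff ball_conj_distrib)
qed

lemma indep_unit_obs: "indep_vars (\<lambda>_. count_space UNIV \<Otimes>\<^sub>M (borel \<Otimes>\<^sub>M borel)) unit_obs {..<n}"
  using indep_units by (simp add: unit_obs_def[abs_def])

lemma unit_obs_measurable:
  "i < n \<Longrightarrow> unit_obs i \<in> M \<rightarrow>\<^sub>M count_space UNIV \<Otimes>\<^sub>M (borel \<Otimes>\<^sub>M borel)"
  using indep_unit_obs by (simp add: indep_vars_def2)

lemma prob_unit_obs_eq:
  assumes "i < n" and "Q \<in> sets (count_space UNIV \<Otimes>\<^sub>M (borel \<Otimes>\<^sub>M borel))"
  shows "\<P>(\<omega> in M. unit_obs i \<omega> \<in> Q) = \<P>(\<omega> in M. unit_obs 0 \<omega> \<in> Q)"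
proof -
  have "\<P>(\<omega> in M. unit_obs j \<omega> \<in> Q)
      = p1 * measure (distr M (borel \<Otimes>\<^sub>M borel) (\<lambda>\<omega>. (C1 0 \<omega>, C0 0 \<omega>))) (Pair True -` Q)
        + (1 - p1) * measure (distr M (borel \<Otimes>\<^sub>M borel) (\<lambda>\<omega>. (C1 0 \<omega>, C0 0 \<omega>))) (Pair False -` Q)"
    if "j < n" for j
  proof -
    have obs: "unit_obs j \<in> M \<rightarrow>\<^sub>M count_space UNIV \<Otimes>\<^sub>M (borel \<Otimes>\<^sub>M borel)"
      using that by (rule unit_obs_measurable)
    have C: "(\<lambda>\<omega>. (C1 j \<omega>, C0 j \<omega>)) \<in> M \<rightarrow>\<^sub>M borel \<Otimes>\<^sub>M borel"
      using measurable_compose[OF obs measurable_snd] by (simp add: unit_obs_def)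
    have "{\<omega> \<in> space M. Z j \<omega>} = (\<lambda>\<omega>. fst (unit_obs j \<omega>)) -` {True} \<inter> space M"
      by (auto simp: unit_obs_def)
    then have Z: "{\<omega> \<in> space M. Z j \<omega>} \<in> events"
      using measurable_sets[OF measurable_compose[OF obs measurable_fst], of "{True}"] by simp
    have "distr M (borel \<Otimes>\<^sub>M borel) (\<lambda>\<omega>. (C1 j \<omega>, C0 j \<omega>))
        = distr M (borel \<Otimes>\<^sub>M borel) (\<lambda>\<omega>. (C1 0 \<omega>, C0 0 \<omega>))"
      using C_ident that by blast
    moreover have "\<P>(\<omega> in M. unit_obs j \<omega> \<in> Q) = \<P>(\<omega> in M. (Z j \<omega>, (C1 j \<omega>, C0 j \<omega>)) \<in> Q)"
      by (simp only: unit_obs_def)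
    moreover note prob_indep_bool_pair[OF C Z _ assms(2)]
    ultimately show ?thesis
      using indep_Z_C Z_bernoulli that by simp
  qed
  from this[OF \<open>i < n\<close>] this[of 0] \<open>i < n\<close> show ?thesis
    by simp
qed

lemma unit_obs_events:
  "i < n \<Longrightarrow> Q \<in> sets (count_space UNIV \<Otimes>\<^sub>M (borel \<Otimes>\<^sub>M borel)) \<Longrightarrow>
    {\<omega> \<in> space M. unit_obs i \<omega> \<in> Q} \<in> events"
  using measurable_sets[OF unit_obs_measurable] by (simp add: vimage_def Int_def conj_commute)

lemma risk_sets_events:
  assumes "S0 \<subseteq> {..<n}" "U0 \<subseteq> {..<n}"
  shows "{\<omega> \<in> space M. risk_set t \<omega> = S0 \<and> treated_risk_set t \<omega> = U0} \<in> events"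
  unfolding risk_sets_eq_iff_patterns[OF assms]
  by (intro sets.sets_Collect_finite_All unit_obs_events risk_pattern_sets) auto

lemma prob_risk_sets_eq_prod:
  assumes "S0 \<subseteq> {..<n}" "U0 \<subseteq> {..<n}"
  shows "\<P>(\<omega> in M. risk_set t \<omega> = S0 \<and> treated_risk_set t \<omega> = U0)
       = (\<Prod>i<n. \<P>(\<omega> in M. unit_obs 0 \<omega> \<in> risk_pattern t (i \<in> S0) (i \<in> U0) (t \<le> T1 i)))"
proof -
  have "\<P>(\<omega> in M. risk_set t \<omega> = S0 \<and> treated_risk_set t \<omega> = U0)
      = \<P>(\<omega> in M. \<forall>i\<in>{..<n}. unit_obs i \<omega> \<in> risk_pattern t (i \<in> S0) (i \<in> U0) (t \<le> T1 i))"
    using assms by (simp only: risk_sets_eq_iff_patterns)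
  also have "\<dots> = (\<Prod>i<n. \<P>(\<omega> in M. unit_obs i \<omega> \<in> risk_pattern t (i \<in> S0) (i \<in> U0) (t \<le> T1 i)))"
    by (rule prob_indep_vars_all[OF indep_unit_obs]) (auto intro: risk_pattern_sets)
  also have "\<dots> = (\<Prod>i<n. \<P>(\<omega> in M. unit_obs 0 \<omega> \<in> risk_pattern t (i \<in> S0) (i \<in> U0) (t \<le> T1 i)))"
    by (intro prod.cong refl prob_unit_obs_eq risk_pattern_sets) simp
  finally show ?thesis .
qed

lemma risk_sets_exchangeable:
  "\<exists>F. exchangeable_nested_sets M (risk_set t) (treated_risk_set t) {i. i < n \<and> t \<le> T1 i} F"
proof
  let ?A = "{i. i < n \<and> t \<le> T1 i}"
  let ?g = "\<lambda>s u a. \<P>(\<omega> in M. unit_obs 0 \<omega> \<in> risk_pattern t s u a)"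
  show "exchangeable_nested_sets M (risk_set t) (treated_risk_set t) ?A
      (\<lambda>m b. ?g True True True ^ b * ?g True False True ^ (m - b)
        * ?g False False True ^ (card ?A - m) * ?g False False False ^ (n - card ?A))"
  proof unfold_locales
    fix S0 U0 assume "S0 \<subseteq> ?A" "U0 \<subseteq> S0"
    then have "S0 \<subseteq> {..<n}" "U0 \<subseteq> {..<n}"
      by auto
    then show "{\<omega> \<in> space M. risk_set t \<omega> = S0 \<and> treated_risk_set t \<omega> = U0} \<in> events"
      by (rule risk_sets_events)
    have "(\<Prod>i<n. ?g (i \<in> S0) (i \<in> U0) (t \<le> T1 i)) = (\<Prod>i<n. ?g (i \<in> S0) (i \<in> U0) (i \<in> ?A))"
      by (intro prod.cong refl) auto
    also have "\<dots> = ?g True True True ^ card U0 * ?g True False True ^ (card S0 - card U0)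
        * ?g False False True ^ (card ?A - card S0) * ?g False False False ^ (card {..<n} - card ?A)"
      by (rule prod_membership_pattern) (use \<open>S0 \<subseteq> ?A\<close> \<open>U0 \<subseteq> S0\<close> in auto)
    finally show "\<P>(\<omega> in M. risk_set t \<omega> = S0 \<and> treated_risk_set t \<omega> = U0)
        = ?g True True True ^ card U0 * ?g True False True ^ (card S0 - card U0)
          * ?g False False True ^ (card ?A - card S0) * ?g False False False ^ (n - card ?A)"
      using prob_risk_sets_eq_prod[OF \<open>S0 \<subseteq> {..<n}\<close> \<open>U0 \<subseteq> {..<n}\<close>] by simp
  qed (auto simp: mem_at_risk_iff realT_eq_T1)
qed

lemma Dbar1_conditionally_hypergeometric:
  assumes "\<P>(\<omega> in M. Nbar n T1 T0 (\<lambda>i. C1 i \<omega>) (\<lambda>i. C0 i \<omega>) (\<lambda>i. Z i \<omega>) t = m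
               \<and> Dbar n T1 T0 (\<lambda>i. C1 i \<omega>) (\<lambda>i. C0 i \<omega>) (\<lambda>i. Z i \<omega>) t = k
               \<and> Nbar1 n T1 T0 (\<lambda>i. C1 i \<omega>) (\<lambda>i. C0 i \<omega>) (\<lambda>i. Z i \<omega>) t = b) > 0"
  shows "\<P>(\<omega> in M. Dbar1 n T1 T0 (\<lambda>i. C1 i \<omega>) (\<lambda>i. C0 i \<omega>) (\<lambda>i. Z i \<omega>) t = j
             \<bar> Nbar n T1 T0 (\<lambda>i. C1 i \<omega>) (\<lambda>i. C0 i \<omega>) (\<lambda>i. Z i \<omega>) t = m
               \<and> Dbar n T1 T0 (\<lambda>i. C1 i \<omega>) (\<lambda>i. C0 i \<omega>) (\<lambda>i. Z i \<omega>) t = k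
               \<and> Nbar1 n T1 T0 (\<lambda>i. C1 i \<omega>) (\<lambda>i. C0 i \<omega>) (\<lambda>i. Z i \<omega>) t = b)
         = hgeom_pmf m k b j"
proof -
  obtain F where "exchangeable_nested_sets M (risk_set t) (treated_risk_set t) {i. i < n \<and> t \<le> T1 i} F"
    using risk_sets_exchangeable by blast
  then show ?thesis
    using assms unfolding counts_eq_card_risk_sets
    by (rule exchangeable_nested_sets.cond_prob_card_inter_eq_hgeom)
qed

end

theorem theorem1:
  fixes M :: "'a measure" and n :: nat and p1 :: real
    and T1 T0 :: "nat \<Rightarrow> real"
    and Z :: "nat \<Rightarrow> 'a \<Rightarrow> bool"
    and C1 C0 :: "nat \<Rightarrow> 'a \<Rightarrow> ereal"
  assumes M: "prob_space M"
    and p1: "0 < p1" "p1 < 1"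
    and T_nonneg: "\<forall>i<n. 0 \<le> T1 i \<and> 0 \<le> T0 i"
    and H0: "\<forall>i<n. T1 i = T0 i"
    and C_nonneg: "\<forall>i<n. \<forall>\<omega>\<in>space M. 0 \<le> C1 i \<omega> \<and> 0 \<le> C0 i \<omega>"
    and indep_units: "prob_space.indep_vars M (\<lambda>_. count_space UNIV \<Otimes>\<^sub>M (borel \<Otimes>\<^sub>M borel))
                        (\<lambda>i \<omega>. (Z i \<omega>, (C1 i \<omega>, C0 i \<omega>))) {..<n}"
    and indep_Z_C: "\<forall>i<n. \<forall>A \<in> sets (borel \<Otimes>\<^sub>M borel).
                        measure M {\<omega> \<in> space M. Z i \<omega> \<and> (C1 i \<omega>, C0 i \<omega>) \<in> A}
                        = measure M {\<omega> \<in> space M. Z i \<omega>} * measure M {\<omega> \<in> space M. (C1 i \<omega>, C0 i \<omega>) \<in> A}"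
    and Z_bernoulli: "\<forall>i<n. measure M {\<omega> \<in> space M. Z i \<omega>} = p1"
    and C_ident: "\<forall>i<n. distr M (borel \<Otimes>\<^sub>M borel) (\<lambda>\<omega>. (C1 i \<omega>, C0 i \<omega>))
                       = distr M (borel \<Otimes>\<^sub>M borel) (\<lambda>\<omega>. (C1 0 \<omega>, C0 0 \<omega>))"
  shows "\<forall>t::real. 0 \<le> t \<longrightarrow> (\<forall>m k b j.
           \<P>(\<omega> in M. Nbar n T1 T0 (\<lambda>i. C1 i \<omega>) (\<lambda>i. C0 i \<omega>) (\<lambda>i. Z i \<omega>) t = m
                   \<and> Dbar n T1 T0 (\<lambda>i. C1 i \<omega>) (\<lambda>i. C0 i \<omega>) (\<lambda>i. Z i \<omega>) t = k
                   \<and> Nbar1 n T1 T0 (\<lambda>i. C1 i \<omega>) (\<lambda>i. C0 i \<omega>) (\<lambda>i. Z i \<omega>) t = b) > 0 \<longrightarrow>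
           \<P>(\<omega> in M. Dbar1 n T1 T0 (\<lambda>i. C1 i \<omega>) (\<lambda>i. C0 i \<omega>) (\<lambda>i. Z i \<omega>) t = j
                 \<bar> Nbar n T1 T0 (\<lambda>i. C1 i \<omega>) (\<lambda>i. C0 i \<omega>) (\<lambda>i. Z i \<omega>) t = m
                   \<and> Dbar n T1 T0 (\<lambda>i. C1 i \<omega>) (\<lambda>i. C0 i \<omega>) (\<lambda>i. Z i \<omega>) t = k
                   \<and> Nbar1 n T1 T0 (\<lambda>i. C1 i \<omega>) (\<lambda>i. C0 i \<omega>) (\<lambda>i. Z i \<omega>) t = b)
           = hgeom_pmf m k b j)"
proof -
  interpret null_survival_trial M n p1 T1 T0 Z C1 C0
    by (rule null_survival_trial.intro[OF M],
        rule null_survival_trial_axioms.intro[OF H0 indep_units indep_Z_C Z_bernoulli C_ident])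
  show ?thesis
    using Dbar1_conditionally_hypergeometric by blast
qed

end
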